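(* Let $(V,v)$ be a pair of continuous upper and lower probabilities on $(\Omega,\mathcal{F})$ and let $\mathcal{F}_0$ be a sub-$\sigma$-algebra of $\mathcal{F}$ with $v(A)\in\{0,1\}$ for all $A\in\mathcal{F}_0$. Then for every $\mathcal{F}_0$-measurable real-valued random variable $\xi$, $$v\Big(\Big\{\int_{\Omega}\xi\, dv \le\xi\le\int_{\Omega}\xi\, dV\Big\}\Big)=1,\quad V\Big(\Big\{\xi=\int_{\Omega}\xi\, dv\Big\}\Big)=1,\quad V\Big(\Big\{\xi=\int_{\Omega}\xi\, dV\Big\}\Big)=1.$$
   Context: For a nonempty set $\mathcal{P}$ of finitely additive probabilities on $\mathcal{F}$, $V(A)=\sup_{P\in\mathcal{P}}P(A)$ and $v(A)=\inf_{P\in\mathcal{P}}P(A)$ are the upper and lower probabilities; they are continuous if $V(A_n)\to V(A)$ and $v(A_n)\to v(A)$ whenever $A_n\uparrow A$ or $A_n\downarrow A$. Choquet integral: $\int_{\Omega}\xi\, d\mu=\int_{0}^{\infty}\mu(\{\xi\ge t\})\,dt+\int_{-\infty}^0[\mu(\{\xi\ge t\})-1]\,dt$. *)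

theory Defs
  imports "HOL-Analysis.Analysis"
begin

definition fa_prob :: "'a set \<Rightarrow> 'a set set \<Rightarrow> ('a set \<Rightarrow> real) \<Rightarrow> bool" where
  "fa_prob \<Omega> F P \<longleftrightarrow>
     (\<forall>A\<in>F. 0 \<le> P A) \<and> P \<Omega> = 1 \<and>
     (\<forall>A\<in>F. \<forall>B\<in>F. A \<inter> B = {} \<longrightarrow> P (A \<union> B) = P A + P B)"

definition upper_prob :: "('a set \<Rightarrow> real) set \<Rightarrow> 'a set \<Rightarrow> real" where
  "upper_prob \<P> A = (SUP P\<in>\<P>. P A)"

definition lower_prob :: "('a set \<Rightarrow> real) set \<Rightarrow> 'a set \<Rightarrow> real" where
  "lower_prob \<P> A = (INF P\<in>\<P>. P A)"

definition continuous_setfun :: "'a set set \<Rightarrow> ('a set \<Rightarrow> real) \<Rightarrow> bool" where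
  "continuous_setfun F \<mu> \<longleftrightarrow>
     (\<forall>A. (\<forall>n. A n \<in> F) \<longrightarrow> incseq A \<longrightarrow> (\<lambda>n. \<mu> (A n)) \<longlonglongrightarrow> \<mu> (\<Union>n. A n)) \<and>
     (\<forall>A. (\<forall>n. A n \<in> F) \<longrightarrow> decseq A \<longrightarrow> (\<lambda>n. \<mu> (A n)) \<longlonglongrightarrow> \<mu> (\<Inter>n. A n))"

definition choquet :: "'a set \<Rightarrow> ('a set \<Rightarrow> real) \<Rightarrow> ('a \<Rightarrow> real) \<Rightarrow> real" where
  "choquet \<Omega> \<mu> \<xi> =
     (LBINT t:{0..}. \<mu> {\<omega>\<in>\<Omega>. t \<le> \<xi> \<omega>}) +
     (LBINT t:{..<0}. \<mu> {\<omega>\<in>\<Omega>. t \<le> \<xi> \<omega>} - 1)"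

end

theory Submission
  imports Defs
begin

text \<open>
  Since \<open>V A = 1 - v (\<Omega> - A)\<close>, both \<open>v\<close> and \<open>V\<close> are \<open>{0,1}\<close>-valued on \<open>F0\<close>, so for
  \<open>\<mu> \<in> {v, V}\<close> the survival function \<open>t \<mapsto> \<mu> {\<xi> \<ge> t}\<close> is an antitone \<open>{0,1}\<close>-valued
  function of \<open>t\<close>. Continuity of \<open>\<mu>\<close> along monotone sequences of level sets forces it to be
  the indicator of \<open>(-\<infinity>, c]\<close> with \<open>\<mu> {\<xi> > c} = 0\<close>, and the Choquet integral of \<open>\<xi>\<close> is
  then the jump point \<open>c\<close>. With \<open>a = \<integral>\<xi> dv\<close> and \<open>b = \<integral>\<xi> dV\<close>, every \<open>P \<in> \<P>\<close> has
  \<open>P {\<xi> \<ge> a} = 1\<close> and \<open>P {\<xi> > b} = 0\<close>, whence \<open>v {a \<le> \<xi> \<le> b} = 1\<close>; moreover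
  \<open>V {\<xi> = a} = V {\<xi> \<le> a} = 1 - v {\<xi> > a} = 1\<close> and \<open>V {\<xi> = b} = V {\<xi> \<ge> b} = 1\<close>.
\<close>

lemma fa_prob_nonneg:
  assumes "fa_prob \<Omega> F P" and "A \<in> F"
  shows "0 \<le> P A"
  using assms unfolding fa_prob_def by blast

lemma fa_prob_space:
  assumes "fa_prob \<Omega> F P"
  shows "P \<Omega> = 1"
  using assms unfolding fa_prob_def by blast

lemma fa_prob_Diff_Int:
  assumes "algebra \<Omega> F" and "fa_prob \<Omega> F P" and "A \<in> F" and "B \<in> F"
  shows "P (A - B) + P (A \<inter> B) = P A"
proof -
  interpret algebra \<Omega> F by fact
  have additive: "\<forall>A\<in>F. \<forall>B\<in>F. A \<inter> B = {} \<longrightarrow> P (A \<union> B) = P A + P B"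
    using assms(2) unfolding fa_prob_def by blast
  have "P ((A - B) \<union> (A \<inter> B)) = P (A - B) + P (A \<inter> B)"
    using additive Diff[OF assms(3,4)] Int[OF assms(3,4)] by (simp add: Diff_Int_distrib2)
  then show ?thesis by (simp add: Un_Diff_Int)
qed

lemma fa_prob_compl:
  assumes "algebra \<Omega> F" and "fa_prob \<Omega> F P" and "A \<in> F"
  shows "P (\<Omega> - A) = 1 - P A"
proof -
  interpret algebra \<Omega> F by fact
  have "\<Omega> \<inter> A = A" using assms(3) sets_into_space by blast
  then show ?thesis
    using fa_prob_Diff_Int[OF assms(1,2) top assms(3)] fa_prob_space[OF assms(2)] by simp
qed

lemma fa_prob_le_1:
  assumes "algebra \<Omega> F" and "fa_prob \<Omega> F P" and "A \<in> F"
  shows "P A \<le> 1"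
  using fa_prob_compl[OF assms] fa_prob_nonneg[OF assms(2) algebra.compl_sets[OF assms(1,3)]]
  by simp

lemma fa_prob_empty:
  assumes "algebra \<Omega> F" and "fa_prob \<Omega> F P"
  shows "P {} = 0"
  using fa_prob_compl[OF assms algebra.top[OF assms(1)]] fa_prob_space[OF assms(2)] by simp

lemma fa_prob_mono:
  assumes "algebra \<Omega> F" and "fa_prob \<Omega> F P" and "A \<in> F" and "B \<in> F" and "A \<subseteq> B"
  shows "P A \<le> P B"
proof -
  interpret algebra \<Omega> F by fact
  have "P (B - A) + P A = P B"
    using fa_prob_Diff_Int[OF assms(1,2,4,3)] assms(5) by (simp add: Int_absorb1)
  then show ?thesis using fa_prob_nonneg[OF assms(2) Diff[OF assms(4,3)]] by simp
qed

lemma fa_prob_Diff_null: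
  assumes "algebra \<Omega> F" and "fa_prob \<Omega> F P" and "A \<in> F" and "B \<in> F" and "P B = 0"
  shows "P (A - B) = P A"
proof -
  interpret algebra \<Omega> F by fact
  have "P (A \<inter> B) = 0"
    using fa_prob_mono[OF assms(1,2) Int[OF assms(3,4)] assms(4)]
      fa_prob_nonneg[OF assms(2) Int[OF assms(3,4)]] assms(5) by simp
  then show ?thesis using fa_prob_Diff_Int[OF assms(1-4)] by simp
qed

lemma fa_prob_Diff_of_eq_1:
  assumes "algebra \<Omega> F" and "fa_prob \<Omega> F P" and "A \<in> F" and "B \<in> F" and "P A = 1"
  shows "P (A - B) = 1 - P B"
proof -
  interpret algebra \<Omega> F by fact
  have "P (\<Omega> - A) = 0" using fa_prob_compl[OF assms(1-3)] assms(5) by simp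
  then have "P (B - (\<Omega> - A)) = P B"
    using fa_prob_Diff_null[OF assms(1,2,4) compl_sets[OF assms(3)]] by simp
  moreover have "B - (\<Omega> - A) = A \<inter> B" using assms(4) sets_into_space by blast
  ultimately show ?thesis using fa_prob_Diff_Int[OF assms(1-4)] assms(5) by simp
qed

locale fa_prob_family = algebra \<Omega> F
  for \<Omega> :: "'a set" and F :: "'a set set" +
  fixes \<P> :: "('a set \<Rightarrow> real) set"
  assumes nonempty: "\<P> \<noteq> {}"
    and fa_prob: "P \<in> \<P> \<Longrightarrow> fa_prob \<Omega> F P"
begin

lemma lower_prob_le:
  assumes "P \<in> \<P>" and "A \<in> F"
  shows "lower_prob \<P> A \<le> P A"
proof -
  have "bdd_below ((\<lambda>P. P A) ` \<P>)"
    using fa_prob_nonneg[OF fa_prob \<open>A \<in> F\<close>] by (intro bdd_belowI[of _ 0]) auto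
  then show ?thesis unfolding lower_prob_def using assms(1) by (rule cINF_lower)
qed

lemma lower_prob_greatest:
  assumes "\<And>P. P \<in> \<P> \<Longrightarrow> c \<le> P A"
  shows "c \<le> lower_prob \<P> A"
  unfolding lower_prob_def using nonempty assms by (rule cINF_greatest)

lemma upper_prob_ge:
  assumes "P \<in> \<P>" and "A \<in> F"
  shows "P A \<le> upper_prob \<P> A"
proof -
  have "bdd_above ((\<lambda>P. P A) ` \<P>)"
    using fa_prob_le_1[OF algebra_axioms fa_prob \<open>A \<in> F\<close>] by (intro bdd_aboveI[of _ 1]) auto
  then show ?thesis unfolding upper_prob_def by (rule cSUP_upper[OF assms(1)])
qed

lemma upper_prob_least:
  assumes "\<And>P. P \<in> \<P> \<Longrightarrow> P A \<le> c"
  shows "upper_prob \<P> A \<le> c"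
  unfolding upper_prob_def using nonempty assms by (rule cSUP_least)

lemma lower_prob_mono:
  assumes "A \<in> F" and "B \<in> F" and "A \<subseteq> B"
  shows "lower_prob \<P> A \<le> lower_prob \<P> B"
  using lower_prob_le[OF _ assms(1)] fa_prob_mono[OF algebra_axioms fa_prob assms]
  by (intro lower_prob_greatest) (meson order_trans)

lemma upper_prob_mono:
  assumes "A \<in> F" and "B \<in> F" and "A \<subseteq> B"
  shows "upper_prob \<P> A \<le> upper_prob \<P> B"
  using upper_prob_ge[OF _ assms(2)] fa_prob_mono[OF algebra_axioms fa_prob assms]
  by (intro upper_prob_least) (meson order_trans)

lemma lower_prob_const:
  assumes "\<And>P. P \<in> \<P> \<Longrightarrow> P A = c"
  shows "lower_prob \<P> A = c"
proof -
  have "lower_prob \<P> A = (INF P\<in>\<P>. c)"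
    unfolding lower_prob_def using assms by (rule INF_cong[OF refl])
  then show ?thesis using nonempty by simp
qed

lemma upper_prob_const:
  assumes "\<And>P. P \<in> \<P> \<Longrightarrow> P A = c"
  shows "upper_prob \<P> A = c"
proof -
  have "upper_prob \<P> A = (SUP P\<in>\<P>. c)"
    unfolding upper_prob_def using assms by (rule SUP_cong[OF refl])
  then show ?thesis using nonempty by simp
qed

lemma lower_prob_space: "lower_prob \<P> \<Omega> = 1"
  using fa_prob_space[OF fa_prob] by (rule lower_prob_const)

lemma upper_prob_space: "upper_prob \<P> \<Omega> = 1"
  using fa_prob_space[OF fa_prob] by (rule upper_prob_const)

lemma lower_prob_empty: "lower_prob \<P> {} = 0"
  using fa_prob_empty[OF algebra_axioms fa_prob] by (rule lower_prob_const)

lemma upper_prob_empty: "upper_prob \<P> {} = 0"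
  using fa_prob_empty[OF algebra_axioms fa_prob] by (rule upper_prob_const)

lemma upper_prob_eq_1_minus_lower_prob_compl:
  assumes "A \<in> F"
  shows "upper_prob \<P> A = 1 - lower_prob \<P> (\<Omega> - A)"
proof (rule antisym)
  show "upper_prob \<P> A \<le> 1 - lower_prob \<P> (\<Omega> - A)"
    using lower_prob_le[OF _ compl_sets[OF assms]] fa_prob_compl[OF algebra_axioms fa_prob assms]
    by (intro upper_prob_least) fastforce
  have "1 - upper_prob \<P> A \<le> lower_prob \<P> (\<Omega> - A)"
    using upper_prob_ge[OF _ assms] fa_prob_compl[OF algebra_axioms fa_prob assms]
    by (intro lower_prob_greatest) fastforce
  then show "1 - lower_prob \<P> (\<Omega> - A) \<le> upper_prob \<P> A" by simp
qed

lemma prob_eq_1_if_lower_prob_eq_1: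
  assumes "P \<in> \<P>" and "A \<in> F" and "lower_prob \<P> A = 1"
  shows "P A = 1"
  using lower_prob_le[OF assms(1,2)] fa_prob_le_1[OF algebra_axioms fa_prob[OF assms(1)] assms(2)]
    assms(3)
  by simp

lemma prob_eq_0_if_upper_prob_eq_0:
  assumes "P \<in> \<P>" and "A \<in> F" and "upper_prob \<P> A = 0"
  shows "P A = 0"
  using upper_prob_ge[OF assms(1,2)] fa_prob_nonneg[OF fa_prob[OF assms(1)] assms(2)] assms(3)
  by simp

lemma lower_prob_Diff_null:
  assumes "A \<in> F" and "B \<in> F" and "upper_prob \<P> B = 0"
  shows "lower_prob \<P> (A - B) = lower_prob \<P> A"
  unfolding lower_prob_def
  using fa_prob_Diff_null[OF algebra_axioms fa_prob assms(1,2)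
      prob_eq_0_if_upper_prob_eq_0[OF _ assms(2,3)]]
  by (rule INF_cong[OF refl])

lemma upper_prob_Diff_null:
  assumes "A \<in> F" and "B \<in> F" and "upper_prob \<P> B = 0"
  shows "upper_prob \<P> (A - B) = upper_prob \<P> A"
  unfolding upper_prob_def
  using fa_prob_Diff_null[OF algebra_axioms fa_prob assms(1,2)
      prob_eq_0_if_upper_prob_eq_0[OF _ assms(2,3)]]
  by (rule SUP_cong[OF refl])

lemma upper_prob_Diff_eq_1:
  assumes "A \<in> F" and "B \<in> F" and "lower_prob \<P> A = 1" and "lower_prob \<P> B = 0"
  shows "upper_prob \<P> (A - B) = 1"
proof -
  have "P (A - B) = P (\<Omega> - B)" if "P \<in> \<P>" for P
    using fa_prob_Diff_of_eq_1[OF algebra_axioms fa_prob[OF that] assms(1,2)]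
      prob_eq_1_if_lower_prob_eq_1[OF that assms(1,3)]
      fa_prob_compl[OF algebra_axioms fa_prob[OF that] assms(2)]
    by simp
  then have "upper_prob \<P> (A - B) = upper_prob \<P> (\<Omega> - B)"
    unfolding upper_prob_def by (rule SUP_cong[OF refl])
  also have "\<dots> = 1 - lower_prob \<P> B"
    using upper_prob_eq_1_minus_lower_prob_compl[OF compl_sets[OF assms(2)]] assms(2)
    by (simp add: Diff_Diff_Int Int_absorb1 sets_into_space)
  finally show ?thesis using assms(4) by simp
qed

end

lemma zero_one_antimono_step:
  fixes g :: "real \<Rightarrow> real"
  assumes antimono: "antimono g"
    and zero_one: "\<And>t. g t \<in> {0, 1}"
    and at_bot: "(\<lambda>n. g (- real n)) \<longlonglongrightarrow> 1"
    and at_top: "(\<lambda>n. g (real n)) \<longlonglongrightarrow> 0"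
    and left_cont: "\<And>c. (\<lambda>n. g (c - inverse (Suc n))) \<longlonglongrightarrow> g c"
  shows "\<exists>c. \<forall>t. g t = (if t \<le> c then 1 else 0)"
proof -
  obtain m where "0 < g (- real m)"
    using order_tendstoD(1)[OF at_bot, of 0]
    by (meson eventually_sequentially order.refl zero_less_one)
  then have "g (- real m) = 1" using zero_one[of "- real m"] by auto
  obtain k where "g (real k) < 1"
    using order_tendstoD(2)[OF at_top, of 1]
    by (meson eventually_sequentially order.refl zero_less_one)
  then have "g (real k) = 0" using zero_one[of "real k"] by auto
  define S where "S = {t. g t = 1}"
  have "S \<noteq> {}" using \<open>g (- real m) = 1\<close> S_def by auto
  have "t \<le> real k" if "t \<in> S" for t
    using that \<open>g (real k) = 0\<close> antimonoD[OF antimono, of "real k" t] by (force simp: S_def)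
  then have "bdd_above S" by (rule bdd_aboveI)
  define c where "c = Sup S"
  have above: "g t = 0" if "c < t" for t
    using that cSup_upper[OF _ \<open>bdd_above S\<close>] zero_one[of t] by (force simp: S_def c_def)
  have "g (c - inverse (Suc n)) = 1" for n
  proof -
    have "c - inverse (Suc n) < Sup S" unfolding c_def by simp
    then obtain s where "s \<in> S" "c - inverse (Suc n) < s"
      using less_cSup_iff[OF \<open>S \<noteq> {}\<close> \<open>bdd_above S\<close>] by blast
    then have "1 \<le> g (c - inverse (Suc n))"
      using antimonoD[OF antimono, of "c - inverse (Suc n)" s] by (simp add: S_def)
    then show ?thesis using zero_one[of "c - inverse (Suc n)"] by auto
  qed
  then have "(\<lambda>n. 1) \<longlonglongrightarrow> g c" using left_cont[of c] by simp
  then have "g c = 1" by (simp add: LIMSEQ_const_iff)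
  then have "g t = 1" if "t \<le> c" for t
    using that antimonoD[OF antimono, of t c] zero_one[of t] by auto
  then show ?thesis using above by (auto intro!: exI[of _ c])
qed

lemma continuous_setfun_incseq:
  assumes "continuous_setfun F \<mu>" and "\<And>n. A n \<in> F" and "incseq A"
  shows "(\<lambda>n. \<mu> (A n)) \<longlonglongrightarrow> \<mu> (\<Union>n. A n)"
  using assms unfolding continuous_setfun_def by blast

lemma continuous_setfun_decseq:
  assumes "continuous_setfun F \<mu>" and "\<And>n. A n \<in> F" and "decseq A"
  shows "(\<lambda>n. \<mu> (A n)) \<longlonglongrightarrow> \<mu> (\<Inter>n. A n)"
  using assms unfolding continuous_setfun_def by blast

lemma continuous_setfun_level_sets_Union:
  fixes \<xi> :: "'a \<Rightarrow> real" and s :: "nat \<Rightarrow> real"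
  assumes "continuous_setfun F \<mu>" and "\<And>t. {\<omega>\<in>\<Omega>. t \<le> \<xi> \<omega>} \<in> F" and "antimono s"
  shows "(\<lambda>n. \<mu> {\<omega>\<in>\<Omega>. s n \<le> \<xi> \<omega>}) \<longlonglongrightarrow> \<mu> (\<Union>n. {\<omega>\<in>\<Omega>. s n \<le> \<xi> \<omega>})"
proof -
  have "incseq (\<lambda>n. {\<omega>\<in>\<Omega>. s n \<le> \<xi> \<omega>})"
    using antimonoD[OF assms(3)] by (force simp: incseq_def)
  then show ?thesis by (rule continuous_setfun_incseq[OF assms(1,2)])
qed

lemma continuous_setfun_level_sets_Inter:
  fixes \<xi> :: "'a \<Rightarrow> real" and s :: "nat \<Rightarrow> real"
  assumes "continuous_setfun F \<mu>" and "\<And>t. {\<omega>\<in>\<Omega>. t \<le> \<xi> \<omega>} \<in> F" and "mono s"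
  shows "(\<lambda>n. \<mu> {\<omega>\<in>\<Omega>. s n \<le> \<xi> \<omega>}) \<longlonglongrightarrow> \<mu> (\<Inter>n. {\<omega>\<in>\<Omega>. s n \<le> \<xi> \<omega>})"
proof -
  have "decseq (\<lambda>n. {\<omega>\<in>\<Omega>. s n \<le> \<xi> \<omega>})"
    using monoD[OF assms(3)] by (force simp: decseq_def)
  then show ?thesis by (rule continuous_setfun_decseq[OF assms(1,2)])
qed

lemma inverse_Suc_antimono: "antimono (\<lambda>n::nat. inverse (real (Suc n)))"
  by (rule antimonoI) (simp add: le_imp_inverse_le)

lemma Union_level_sets_uminus_nat:
  fixes \<xi> :: "'a \<Rightarrow> real"
  shows "(\<Union>n. {\<omega>\<in>\<Omega>. - real n \<le> \<xi> \<omega>}) = \<Omega>"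
proof -
  have "\<omega> \<in> (\<Union>n. {\<omega>\<in>\<Omega>. - real n \<le> \<xi> \<omega>})" if "\<omega> \<in> \<Omega>" for \<omega>
  proof -
    obtain n where "- \<xi> \<omega> \<le> real n" using real_arch_simple by blast
    then show ?thesis using that by (auto intro!: exI[of _ n])
  qed
  then show ?thesis by blast
qed

lemma Inter_level_sets_nat:
  fixes \<xi> :: "'a \<Rightarrow> real"
  shows "(\<Inter>n. {\<omega>\<in>\<Omega>. real n \<le> \<xi> \<omega>}) = {}"
proof -
  have "\<omega> \<notin> (\<Inter>n. {\<omega>\<in>\<Omega>. real n \<le> \<xi> \<omega>})" for \<omega>
  proof -
    obtain n where "\<xi> \<omega> < real n" using reals_Archimedean2 by blast
    then show ?thesis by (auto intro!: exI[of _ n])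
  qed
  then show ?thesis by blast
qed

lemma Inter_level_sets_left:
  fixes \<xi> :: "'a \<Rightarrow> real"
  shows "(\<Inter>n. {\<omega>\<in>\<Omega>. c - inverse (Suc n) \<le> \<xi> \<omega>}) = {\<omega>\<in>\<Omega>. c \<le> \<xi> \<omega>}"
proof (intro equalityI subsetI)
  fix \<omega> assume \<omega>: "\<omega> \<in> (\<Inter>n. {\<omega>\<in>\<Omega>. c - inverse (Suc n) \<le> \<xi> \<omega>})"
  show "\<omega> \<in> {\<omega>\<in>\<Omega>. c \<le> \<xi> \<omega>}"
  proof (rule ccontr)
    assume "\<omega> \<notin> {\<omega>\<in>\<Omega>. c \<le> \<xi> \<omega>}"
    then have "0 < c - \<xi> \<omega>" using \<omega> by auto
    then obtain n where "inverse (Suc n) < c - \<xi> \<omega>" using reals_Archimedean by blast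
    then show False using \<omega> by (auto dest!: spec[of _ n])
  qed
qed (auto intro: order_trans[rotated])

lemma Union_level_sets_right:
  fixes \<xi> :: "'a \<Rightarrow> real"
  shows "(\<Union>n. {\<omega>\<in>\<Omega>. c + inverse (Suc n) \<le> \<xi> \<omega>}) = {\<omega>\<in>\<Omega>. c < \<xi> \<omega>}"
proof (intro equalityI subsetI)
  fix \<omega> assume \<omega>: "\<omega> \<in> {\<omega>\<in>\<Omega>. c < \<xi> \<omega>}"
  then have "0 < \<xi> \<omega> - c" by simp
  then obtain n where "inverse (Suc n) < \<xi> \<omega> - c" using reals_Archimedean by blast
  then show "\<omega> \<in> (\<Union>n. {\<omega>\<in>\<Omega>. c + inverse (Suc n) \<le> \<xi> \<omega>})"
    using \<omega> by (auto intro!: exI[of _ n])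
qed (auto intro: less_le_trans[rotated])

lemma continuous_setfun_zero_one_survival_step:
  fixes \<mu> :: "'a set \<Rightarrow> real" and \<xi> :: "'a \<Rightarrow> real"
  assumes cont: "continuous_setfun F \<mu>"
    and mono: "\<And>A B. A \<in> F \<Longrightarrow> B \<in> F \<Longrightarrow> A \<subseteq> B \<Longrightarrow> \<mu> A \<le> \<mu> B"
    and space: "\<mu> \<Omega> = 1" and empty: "\<mu> {} = 0"
    and level: "\<And>t. {\<omega>\<in>\<Omega>. t \<le> \<xi> \<omega>} \<in> F"
    and zero_one: "\<And>t. \<mu> {\<omega>\<in>\<Omega>. t \<le> \<xi> \<omega>} \<in> {0, 1}"
  obtains c where "\<And>t. \<mu> {\<omega>\<in>\<Omega>. t \<le> \<xi> \<omega>} = (if t \<le> c then 1 else 0)"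
    and "\<mu> {\<omega>\<in>\<Omega>. c < \<xi> \<omega>} = 0"
proof -
  define g where "g t = \<mu> {\<omega>\<in>\<Omega>. t \<le> \<xi> \<omega>}" for t
  have anti: "antimono g"
    unfolding g_def by (rule antimonoI, rule mono[OF level level]) auto
  have at_bot: "(\<lambda>n. g (- real n)) \<longlonglongrightarrow> 1"
    using continuous_setfun_level_sets_Union[OF cont level, of "\<lambda>n. - real n"] space
    by (simp add: g_def antimono_def Union_level_sets_uminus_nat)
  have at_top: "(\<lambda>n. g (real n)) \<longlonglongrightarrow> 0"
    using continuous_setfun_level_sets_Inter[OF cont level, of real] empty
    by (simp add: g_def mono_def Inter_level_sets_nat)
  have left_cont: "(\<lambda>n. g (c - inverse (Suc n))) \<longlonglongrightarrow> g c" for c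
  proof -
    have "mono (\<lambda>n. c - inverse (real (Suc n)))"
      using antimonoD[OF inverse_Suc_antimono] by (intro monoI) simp
    from continuous_setfun_level_sets_Inter[OF cont level this]
    show ?thesis unfolding Inter_level_sets_left by (simp add: g_def)
  qed
  have "g t \<in> {0, 1}" for t
    using zero_one by (simp add: g_def)
  then obtain c where step: "g t = (if t \<le> c then 1 else 0)" for t
    using zero_one_antimono_step[OF anti _ at_bot at_top left_cont] by blast
  have "antimono (\<lambda>n. c + inverse (real (Suc n)))"
    using antimonoD[OF inverse_Suc_antimono] by (intro antimonoI) simp
  from continuous_setfun_level_sets_Union[OF cont level this]
  have "(\<lambda>n. 0) \<longlonglongrightarrow> \<mu> {\<omega>\<in>\<Omega>. c < \<xi> \<omega>}"
    unfolding Union_level_sets_right using step[of "c + inverse (Suc _)"] by (simp add: g_def)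
  then have "\<mu> {\<omega>\<in>\<Omega>. c < \<xi> \<omega>} = 0" by (simp add: LIMSEQ_const_iff)
  then show ?thesis using that step unfolding g_def by blast
qed

lemma choquet_eq_threshold:
  assumes "\<And>t. \<mu> {\<omega>\<in>\<Omega>. t \<le> \<xi> \<omega>} = (if t \<le> c then 1 else 0)"
  shows "choquet \<Omega> \<mu> \<xi> = c"
proof -
  have pos: "(\<lambda>t::real. indicator {0..} t *\<^sub>R \<mu> {\<omega>\<in>\<Omega>. t \<le> \<xi> \<omega>}) = indicator {0..c}"
    by (auto simp: assms indicator_def fun_eq_iff)
  have neg: "(\<lambda>t::real. indicator {..<0} t *\<^sub>R (\<mu> {\<omega>\<in>\<Omega>. t \<le> \<xi> \<omega>} - 1)) =
      (\<lambda>t. - indicator {c<..<0} t)"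
    by (auto simp: assms indicator_def fun_eq_iff)
  have "choquet \<Omega> \<mu> \<xi> = measure lborel {0..c} - measure lborel {c<..<0}"
    unfolding choquet_def set_lebesgue_integral_def pos neg by simp
  also have "\<dots> = c"
    by (cases "0 \<le> c") simp_all
  finally show ?thesis .
qed

lemma choquet_zero_one_survival:
  fixes \<mu> :: "'a set \<Rightarrow> real" and \<xi> :: "'a \<Rightarrow> real"
  assumes "continuous_setfun F \<mu>"
    and "\<And>A B. A \<in> F \<Longrightarrow> B \<in> F \<Longrightarrow> A \<subseteq> B \<Longrightarrow> \<mu> A \<le> \<mu> B"
    and "\<mu> \<Omega> = 1" and "\<mu> {} = 0"
    and "\<And>t. {\<omega>\<in>\<Omega>. t \<le> \<xi> \<omega>} \<in> F"
    and "\<And>t. \<mu> {\<omega>\<in>\<Omega>. t \<le> \<xi> \<omega>} \<in> {0, 1}"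
  shows "\<mu> {\<omega>\<in>\<Omega>. choquet \<Omega> \<mu> \<xi> \<le> \<xi> \<omega>} = 1"
    and "\<mu> {\<omega>\<in>\<Omega>. choquet \<Omega> \<mu> \<xi> < \<xi> \<omega>} = 0"
proof -
  obtain c where step: "\<And>t. \<mu> {\<omega>\<in>\<Omega>. t \<le> \<xi> \<omega>} = (if t \<le> c then 1 else 0)"
    and strict: "\<mu> {\<omega>\<in>\<Omega>. c < \<xi> \<omega>} = 0"
    using continuous_setfun_zero_one_survival_step[OF assms] by blast
  have "choquet \<Omega> \<mu> \<xi> = c" using step by (rule choquet_eq_threshold)
  then show "\<mu> {\<omega>\<in>\<Omega>. choquet \<Omega> \<mu> \<xi> \<le> \<xi> \<omega>} = 1"
    and "\<mu> {\<omega>\<in>\<Omega>. choquet \<Omega> \<mu> \<xi> < \<xi> \<omega>} = 0"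
    using step strict by simp_all
qed

theorem corollary1:
  fixes \<Omega> :: "'a set" and F F0 :: "'a set set" and \<P> :: "('a set \<Rightarrow> real) set"
    and \<xi> :: "'a \<Rightarrow> real"
  assumes F: "sigma_algebra \<Omega> F"
    and P_ne: "\<P> \<noteq> {}"
    and P_fa: "\<forall>P\<in>\<P>. fa_prob \<Omega> F P"
    and contV: "continuous_setfun F (upper_prob \<P>)"
    and contv: "continuous_setfun F (lower_prob \<P>)"
    and F0: "sigma_algebra \<Omega> F0" "F0 \<subseteq> F"
    and F0_01: "\<forall>A\<in>F0. lower_prob \<P> A \<in> {0, 1}"
    and meas: "\<xi> \<in> borel_measurable (sigma \<Omega> F0)"
  shows "lower_prob \<P> {\<omega>\<in>\<Omega>. choquet \<Omega> (lower_prob \<P>) \<xi> \<le> \<xi> \<omega> \<and>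
                               \<xi> \<omega> \<le> choquet \<Omega> (upper_prob \<P>) \<xi>} = 1 \<and>
         upper_prob \<P> {\<omega>\<in>\<Omega>. \<xi> \<omega> = choquet \<Omega> (lower_prob \<P>) \<xi>} = 1 \<and>
         upper_prob \<P> {\<omega>\<in>\<Omega>. \<xi> \<omega> = choquet \<Omega> (upper_prob \<P>) \<xi>} = 1"
proof -
  interpret fa_prob_family \<Omega> F \<P>
    using sigma_algebra.axioms(1)[OF F] P_ne P_fa
    by (simp add: fa_prob_family_def fa_prob_family_axioms_def)
  interpret F0: sigma_algebra \<Omega> F0 by (rule F0(1))
  have ge_F0: "{\<omega>\<in>\<Omega>. t \<le> \<xi> \<omega>} \<in> F0" for t
    using meas unfolding borel_measurable_iff_ge F0.space_measure_of_eq F0.sets_measure_of_eq by blast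
  then have ge: "{\<omega>\<in>\<Omega>. t \<le> \<xi> \<omega>} \<in> F" for t using F0(2) by blast
  have gt: "{\<omega>\<in>\<Omega>. t < \<xi> \<omega>} \<in> F" for t
    using meas F0(2)
    unfolding borel_measurable_iff_greater F0.space_measure_of_eq F0.sets_measure_of_eq by blast
  have lower_01: "lower_prob \<P> {\<omega>\<in>\<Omega>. t \<le> \<xi> \<omega>} \<in> {0, 1}" for t
    using F0_01 ge_F0 by blast
  have upper_01: "upper_prob \<P> {\<omega>\<in>\<Omega>. t \<le> \<xi> \<omega>} \<in> {0, 1}" for t
    using upper_prob_eq_1_minus_lower_prob_compl[OF ge] F0_01 F0.compl_sets[OF ge_F0] by auto
  define a where "a = choquet \<Omega> (lower_prob \<P>) \<xi>"
  define b where "b = choquet \<Omega> (upper_prob \<P>) \<xi>"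
  note a = choquet_zero_one_survival[OF contv lower_prob_mono lower_prob_space lower_prob_empty
      ge lower_01, folded a_def]
  note b = choquet_zero_one_survival[OF contV upper_prob_mono upper_prob_space upper_prob_empty
      ge upper_01, folded b_def]
  have "{\<omega>\<in>\<Omega>. a \<le> \<xi> \<omega> \<and> \<xi> \<omega> \<le> b} = {\<omega>\<in>\<Omega>. a \<le> \<xi> \<omega>} - {\<omega>\<in>\<Omega>. b < \<xi> \<omega>}"
    and "{\<omega>\<in>\<Omega>. \<xi> \<omega> = a} = {\<omega>\<in>\<Omega>. a \<le> \<xi> \<omega>} - {\<omega>\<in>\<Omega>. a < \<xi> \<omega>}"
    and "{\<omega>\<in>\<Omega>. \<xi> \<omega> = b} = {\<omega>\<in>\<Omega>. b \<le> \<xi> \<omega>} - {\<omega>\<in>\<Omega>. b < \<xi> \<omega>}"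
    by auto
  then show ?thesis
    using lower_prob_Diff_null[OF ge gt b(2)] upper_prob_Diff_eq_1[OF ge gt a]
      upper_prob_Diff_null[OF ge gt b(2)] a(1) b(1)
    unfolding a_def[symmetric] b_def[symmetric] by simp
qed

end
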